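(* Let $(\Omega,\mathcal{F},\mathbb{P})$ be a probability space, $(E,\mathcal{E})$ a measurable space, $V\colon E\to[0,\infty]$ measurable, $Z\colon\mathbb{N}_0\times\Omega\to E$ a stochastic process, and let $\gamma_n\in[0,\infty)$, $\delta_n\in(0,\infty]$, $\Omega_n\in\mathcal{F}$, $n\in\mathbb{N}_0$, satisfy $\Omega_0=\Omega$, $\Omega_n\setminus\Omega_{n+1}\subseteq\{V(Z_n)>\delta_n\}$ and $\mathbb{E}[\mathbb{1}_{\Omega_{n+1}}V(Z_{n+1})]\le\gamma_n\,\mathbb{E}[\mathbb{1}_{\Omega_n}V(Z_n)]$ for all $n\in\mathbb{N}_0$. Then for all $n\in\mathbb{N}_0$, $p\in[1,\infty]$ and all measurable $\bar V\colon E\to[0,\infty]$ with $\bar V\le V$: $$\mathbb{E}[\mathbb{1}_{\Omega_n}V(Z_n)]\le\Big(\prod_{k=0}^{n-1}\gamma_k\Big)\mathbb{E}[V(Z_0)],\qquad \mathbb{P}[(\Omega_n)^c]\le\Big(\sum_{k=0}^{n-1}\frac{\prod_{l=0}^{k-1}\gamma_l}{\delta_k}\Big)\mathbb{E}[V(Z_0)],$$ $$\mathbb{E}[\bar V(Z_n)]\le\Big(\prod_{k=0}^{n-1}\gamma_k\Big)\mathbb{E}[V(Z_0)]+\|\bar V(Z_n)\|_{L^p(\Omega;\mathbb{R})}\Big[\Big(\sum_{k=0}^{n-1}\frac{\prod_{l=0}^{k-1}\gamma_l}{\delta_k}\Big)\mathbb{E}[V(Z_0)]\Big]^{(1-1/p)}.$$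 *)

theory Defs
  imports "HOL-Probability.Probability"
begin

definition ennpow :: "ennreal \<Rightarrow> real \<Rightarrow> ennreal" where
  "ennpow x r = (if r = 0 then 1 else if x = \<infinity> then \<infinity> else ennreal (enn2real x powr r))"

definition Lp_norm :: "'a measure \<Rightarrow> ennreal \<Rightarrow> ('a \<Rightarrow> ennreal) \<Rightarrow> ennreal" where
  "Lp_norm M p f = (if p = \<infinity> then esssup M f
     else ennpow (\<integral>\<^sup>+ x. ennpow (f x) (enn2real p) \<partial>M) (1 / enn2real p))"

definition conj_exp :: "ennreal \<Rightarrow> real" where
  "conj_exp p = (if p = \<infinity> then 1 else 1 - 1 / enn2real p)"

end

theory Submission
  imports Defs
begin

text \<open>Iterating the decay condition bounds \<open>E[1_{\<Omega>_n} V(Z_n)]\<close> by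
  \<open>(\<Prod>k<n. \<gamma>_k) E[V(Z_0)]\<close>. Since \<open>V(Z_k) > \<delta>_k\<close> on \<open>\<Omega>_k - \<Omega>_{k+1} \<subseteq> \<Omega>_k\<close>, Markov's
  inequality bounds the probability of this set by that quantity divided by \<open>\<delta>_k\<close>, and as
  \<open>\<Omega>_0\<close> is the whole space, the complement of \<open>\<Omega>_n\<close> is covered by these sets. Finally,
  \<open>E[Vbar(Z_n)]\<close> is split along \<open>\<Omega>_n\<close>: on \<open>\<Omega>_n\<close> one uses \<open>Vbar \<le> V\<close>, on the complement
  Hoelder's inequality \<open>E[1_A X] \<le> \<parallel>X\<parallel>_p P[A]^(1-1/p)\<close>.\<close>

lemma ennpow_measurable[measurable]:
  assumes [measurable]: "f \<in> borel_measurable M"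
  shows "(\<lambda>x. ennpow (f x) r) \<in> borel_measurable M"
  unfolding ennpow_def by measurable

lemma ennpow_one [simp]: "ennpow x 1 = x"
  by (cases x) (auto simp: ennpow_def)

lemma ennpow_zero [simp]: "ennpow x 0 = 1"
  by (simp add: ennpow_def)

lemma ennpow_mono: "x \<le> y \<Longrightarrow> 0 \<le> r \<Longrightarrow> ennpow x r \<le> ennpow y r"
  by (auto simp: ennpow_def top_unique less_top[symmetric]
           intro!: ennreal_leI powr_mono2 enn2real_mono)

lemma ennpow_pos: "0 < x \<Longrightarrow> 0 < ennpow x r"
  by (cases x) (auto simp: ennpow_def)

lemma ennpow_top: "0 < r \<Longrightarrow> ennpow \<infinity> r = \<infinity>"
  by (simp add: ennpow_def)

lemma ennpow_ennreal: "0 \<le> t \<Longrightarrow> r \<noteq> 0 \<Longrightarrow> ennpow (ennreal t) r = ennreal (t powr r)"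
  by (simp add: ennpow_def)

lemma ennpow_eq_0_iff: "0 < r \<Longrightarrow> ennpow x r = 0 \<longleftrightarrow> x = 0"
  by (cases x) (auto simp: ennpow_def)

lemma conj_exp_nonneg:
  assumes "1 \<le> p"
  shows "0 \<le> conj_exp p"
proof (cases "p = \<infinity>")
  case False
  then have "ennreal (enn2real p) \<ge> 1"
    using assms by (simp add: ennreal_enn2real_if)
  then have "1 \<le> enn2real p"
    by (simp add: ennreal_ge_1)
  then show ?thesis
    using False by (simp add: conj_exp_def)
qed (simp add: conj_exp_def)

text \<open>Young's inequality for \<open>t/a\<close> and \<open>1/b\<close>, multiplied by \<open>a b\<close>.\<close>
lemma Youngs_inequality_scaled:
  fixes t a b r q :: real
  assumes "0 \<le> t" "0 < a" "0 < b" "1 < r" "1 < q" "1/r + 1/q = 1"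
  shows "t \<le> a * b / (r * a powr r) * t powr r + a * b / (q * b powr q)"
proof -
  have "(t/a) * (1/b) \<le> (t/a) powr r / r + (1/b) powr q / q"
    using Youngs_inequality[of r q "t/a" "1/b"] assms by auto
  also have "\<dots> = t powr r / a powr r / r + 1 / b powr q / q"
    using assms by (simp add: powr_divide)
  finally have "a * b * ((t/a) * (1/b)) \<le> a * b * (t powr r / a powr r / r + 1 / b powr q / q)"
    using assms by (intro mult_left_mono) auto
  then show ?thesis
    using assms by (simp add: field_simps)
qed

lemma ennreal_Youngs_inequality_scaled:
  fixes t :: ennreal and a b r q :: real
  assumes "0 < a" "0 < b" "1 < r" "1 < q" "1/r + 1/q = 1"
  shows "t \<le> ennreal (a * b / (r * a powr r)) * ennpow t r + ennreal (a * b / (q * b powr q))"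
proof (cases t)
  case (real s)
  have "ennreal s \<le> ennreal (a * b / (r * a powr r) * s powr r + a * b / (q * b powr q))"
    using Youngs_inequality_scaled[of s a b r q] real assms by (intro ennreal_leI) auto
  also have "\<dots> = ennreal (a * b / (r * a powr r)) * ennreal (s powr r) + ennreal (a * b / (q * b powr q))"
    using assms by (simp add: ennreal_plus ennreal_mult[symmetric])
  finally show ?thesis
    using real assms by (simp add: ennpow_ennreal)
next
  case top
  then show ?thesis
    using assms by (simp add: ennpow_def ennreal_mult_top)
qed

lemma nn_integral_indicator_Holder_finite:
  fixes r :: real
  assumes [measurable]: "f \<in> borel_measurable M" "A \<in> sets M" and "1 < r"
    and I: "(\<integral>\<^sup>+x. ennpow (f x) r \<partial>M) = ennreal I" "0 < I"
    and m: "emeasure M A = ennreal m" "0 < m"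
  shows "(\<integral>\<^sup>+x. indicator A x * f x \<partial>M) \<le> ennreal (I powr (1/r) * m powr (1 - 1/r))"
proof -
  define q where "q = r / (r - 1)"
  have q: "1 < q" "1/r + 1/q = 1" "1/q = 1 - 1/r"
    using \<open>1 < r\<close> by (auto simp: q_def field_simps)
  \<comment> \<open>With this scaling the two Young terms integrate to \<open>a b / r\<close> and \<open>a b / q\<close>.\<close>
  define a where "a = I powr (1/r)"
  define b where "b = m powr (1/q)"
  have a: "0 < a" "a powr r = I" and b: "0 < b" "b powr q = m"
    using I m \<open>1 < r\<close> \<open>1 < q\<close> by (auto simp: a_def b_def powr_powr)
  define c\<^sub>1 where "c\<^sub>1 = a * b / (r * a powr r)"
  define c\<^sub>2 where "c\<^sub>2 = a * b / (q * b powr q)"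
  have c: "0 \<le> c\<^sub>1" "0 \<le> c\<^sub>2"
    using a b \<open>1 < r\<close> q by (auto simp: c\<^sub>1_def c\<^sub>2_def)
  have "(\<integral>\<^sup>+x. indicator A x * f x \<partial>M)
      \<le> (\<integral>\<^sup>+x. ennreal c\<^sub>1 * ennpow (f x) r + ennreal c\<^sub>2 * indicator A x \<partial>M)"
    using ennreal_Youngs_inequality_scaled[OF a(1) b(1) \<open>1 < r\<close> q(1,2)]
    by (intro nn_integral_mono) (auto simp: c\<^sub>1_def c\<^sub>2_def indicator_def)
  also have "\<dots> = ennreal (c\<^sub>1 * I + c\<^sub>2 * m)"
    using c I m by (simp add: nn_integral_add nn_integral_cmult nn_integral_cmult_indicator
                              ennreal_mult ennreal_plus)
  also have "c\<^sub>1 * I + c\<^sub>2 * m = a * b * (1/r + 1/q)"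
    using a b I m by (simp add: c\<^sub>1_def c\<^sub>2_def distrib_left)
  finally show ?thesis
    using q by (simp add: a_def b_def)
qed

lemma nn_integral_indicator_Holder:
  fixes r :: real
  assumes [measurable]: "f \<in> borel_measurable M" "A \<in> sets M" and "1 < r"
  shows "(\<integral>\<^sup>+x. indicator A x * f x \<partial>M)
     \<le> ennpow (\<integral>\<^sup>+x. ennpow (f x) r \<partial>M) (1/r) * ennpow (emeasure M A) (1 - 1/r)"
    (is "?L \<le> ennpow ?I _ * ennpow ?m _")
proof -
  have r: "0 < 1/r" "0 < 1 - 1/r"
    using \<open>1 < r\<close> by (auto simp: field_simps)
  consider "?m = 0" | "?I = 0" | "?I \<noteq> 0" "?m \<noteq> 0" "?I = \<infinity> \<or> ?m = \<infinity>"
    | "?I \<noteq> 0" "?I \<noteq> \<infinity>" "?m \<noteq> 0" "?m \<noteq> \<infinity>"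
    by blast
  then show ?thesis
  proof cases
    case 1
    have "?L \<le> (\<integral>\<^sup>+x. \<infinity> * indicator A x \<partial>M)"
      by (intro nn_integral_mono) (auto simp: indicator_def)
    then show ?thesis
      using 1 by (simp add: nn_integral_cmult_indicator)
  next
    case 2
    then have "AE x in M. f x = 0"
      using \<open>1 < r\<close> by (auto simp: nn_integral_0_iff_AE ennpow_eq_0_iff)
    then have "?L = 0"
      by (subst nn_integral_0_iff_AE) auto
    then show ?thesis
      by simp
  next
    case 3
    then have "ennpow ?I (1/r) * ennpow ?m (1 - 1/r) = \<infinity>"
      using ennpow_top[OF r(1)] ennpow_top[OF r(2)] ennpow_pos[of ?I "1/r"] ennpow_pos[of ?m "1 - 1/r"]
      by (auto simp: ennreal_mult_eq_top_iff zero_less_iff_neq_zero)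
    then show ?thesis
      by simp
  next
    case 4
    then obtain I m where "?I = ennreal I" "0 < I" "?m = ennreal m" "0 < m"
      by (intro that[of "enn2real ?I" "enn2real ?m"])
         (auto simp: enn2real_positive_iff less_top[symmetric] zero_less_iff_neq_zero)
    then show ?thesis
      using nn_integral_indicator_Holder_finite[of f M A r I m] \<open>1 < r\<close>
      by (simp add: ennpow_ennreal ennreal_mult)
  qed
qed

lemma nn_integral_indicator_le_Lp_norm:
  assumes [measurable]: "f \<in> borel_measurable M" "A \<in> sets M" and "1 \<le> p"
  shows "(\<integral>\<^sup>+x. indicator A x * f x \<partial>M) \<le> Lp_norm M p f * ennpow (emeasure M A) (conj_exp p)"
proof (cases "p = \<infinity>")
  case True
  have "(\<integral>\<^sup>+x. indicator A x * f x \<partial>M) \<le> (\<integral>\<^sup>+x. esssup M f * indicator A x \<partial>M)"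
    using esssup_AE[of f M] by (intro nn_integral_mono_AE) (auto simp: indicator_def)
  then show ?thesis
    using True by (simp add: nn_integral_cmult_indicator Lp_norm_def conj_exp_def)
next
  case False
  define r where "r = enn2real p"
  have "p = ennreal r"
    using False by (simp add: r_def ennreal_enn2real_if)
  then have "1 \<le> r"
    using \<open>1 \<le> p\<close> by (simp add: ennreal_ge_1)
  have Lp: "Lp_norm M p f = ennpow (\<integral>\<^sup>+x. ennpow (f x) r \<partial>M) (1/r)"
    and conj: "conj_exp p = 1 - 1/r"
    using False by (simp_all add: Lp_norm_def conj_exp_def r_def)
  show ?thesis
  proof (cases "r = 1")
    case True
    have "(\<integral>\<^sup>+x. indicator A x * f x \<partial>M) \<le> (\<integral>\<^sup>+x. f x \<partial>M)"
      by (intro nn_integral_mono) (auto simp: indicator_def)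
    then show ?thesis
      by (simp add: Lp conj True)
  next
    case False
    with \<open>1 \<le> r\<close> show ?thesis
      unfolding Lp conj by (intro nn_integral_indicator_Holder) auto
  qed
qed

lemma ennreal_le_prod_mult_of_step:
  fixes a :: "nat \<Rightarrow> ennreal"
  assumes "\<And>k. a (Suc k) \<le> ennreal (\<gamma> k) * a k"
  shows "a n \<le> (\<Prod>k<n. ennreal (\<gamma> k)) * a 0"
proof (induction n)
  case (Suc n)
  have "a (Suc n) \<le> ennreal (\<gamma> n) * a n"
    by (rule assms)
  also have "\<dots> \<le> ennreal (\<gamma> n) * ((\<Prod>k<n. ennreal (\<gamma> k)) * a 0)"
    using Suc by (rule mult_left_mono) simp
  finally show ?case
    by (simp add: ac_simps)
qed simp

lemma emeasure_le_nn_integral_indicator_divide: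
  assumes [measurable]: "A \<in> sets M" "B \<in> sets M" "f \<in> borel_measurable M"
    and "B \<subseteq> A" and "0 < c" and "\<And>x. x \<in> B \<Longrightarrow> c < f x"
  shows "emeasure M B \<le> (\<integral>\<^sup>+x. indicator A x * f x \<partial>M) / c"
proof (cases "c = \<infinity>")
  case True
  then have "B = {}"
    using assms(6) by fastforce
  then show ?thesis
    by simp
next
  case False
  have "c * emeasure M B = (\<integral>\<^sup>+x. c * indicator B x \<partial>M)"
    by (simp add: nn_integral_cmult_indicator)
  also have "\<dots> \<le> (\<integral>\<^sup>+x. indicator A x * f x \<partial>M)"
    using assms(4,6) by (intro nn_integral_mono) (auto simp: indicator_def less_imp_le)
  finally have "c * emeasure M B / c \<le> (\<integral>\<^sup>+x. indicator A x * f x \<partial>M) / c"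
    by (rule divide_right_mono_ennreal)
  moreover have "c * emeasure M B / c = emeasure M B"
    using False \<open>0 < c\<close> ennreal_mult_divide_eq[of c "emeasure M B"] by (simp add: mult.commute)
  ultimately show ?thesis
    by simp
qed

lemma emeasure_diff_le_sum_of_step_bounds:
  assumes "\<And>k. \<Omega> k \<in> sets M" and "\<And>k. emeasure M (\<Omega> k - \<Omega> (Suc k)) \<le> b k"
  shows "emeasure M (\<Omega> 0 - \<Omega> n) \<le> (\<Sum>k<n. b k)"
proof -
  have "\<Omega> 0 - \<Omega> n \<subseteq> (\<Union>k<n. \<Omega> k - \<Omega> (Suc k))"
    by (induction n) (auto simp: lessThan_Suc)
  then have "emeasure M (\<Omega> 0 - \<Omega> n) \<le> emeasure M (\<Union>k<n. \<Omega> k - \<Omega> (Suc k))"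
    using assms(1) by (intro emeasure_mono) auto
  also have "\<dots> \<le> (\<Sum>k<n. emeasure M (\<Omega> k - \<Omega> (Suc k)))"
    using assms(1) by (intro emeasure_subadditive_finite) auto
  also have "\<dots> \<le> (\<Sum>k<n. b k)"
    by (intro sum_mono assms(2))
  finally show ?thesis .
qed

lemma nn_integral_le_indicator_plus_Lp_norm:
  assumes [measurable]: "f \<in> borel_measurable M" "g \<in> borel_measurable M" "A \<in> sets M"
    and "1 \<le> p" and "\<And>x. x \<in> space M \<Longrightarrow> g x \<le> f x"
  shows "(\<integral>\<^sup>+x. g x \<partial>M)
    \<le> (\<integral>\<^sup>+x. indicator A x * f x \<partial>M) + Lp_norm M p g * ennpow (emeasure M (space M - A)) (conj_exp p)"
proof -
  have "(\<integral>\<^sup>+x. g x \<partial>M) = (\<integral>\<^sup>+x. indicator A x * g x + indicator (space M - A) x * g x \<partial>M)"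
    by (intro nn_integral_cong) (auto simp: indicator_def)
  also have "\<dots> = (\<integral>\<^sup>+x. indicator A x * g x \<partial>M) + (\<integral>\<^sup>+x. indicator (space M - A) x * g x \<partial>M)"
    by (simp add: nn_integral_add)
  also have "\<dots> \<le> (\<integral>\<^sup>+x. indicator A x * f x \<partial>M) + Lp_norm M p g * ennpow (emeasure M (space M - A)) (conj_exp p)"
    using assms(4,5) by (intro add_mono nn_integral_mono mult_left_mono nn_integral_indicator_le_Lp_norm) auto
  finally show ?thesis .
qed

theorem proposition2p1:
  fixes M :: "'a measure" and N :: "'e measure"
    and V :: "'e \<Rightarrow> ennreal" and Z :: "nat \<Rightarrow> 'a \<Rightarrow> 'e"
    and \<gamma> :: "nat \<Rightarrow> real" and \<delta> :: "nat \<Rightarrow> ennreal" and \<Omega> :: "nat \<Rightarrow> 'a set"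
    and n :: nat and p :: ennreal and Vbar :: "'e \<Rightarrow> ennreal"
  assumes "prob_space M"
    and V_meas: "V \<in> borel_measurable N"
    and Z_meas: "\<And>k. Z k \<in> measurable M N"
    and \<gamma>_nonneg: "\<And>k. \<gamma> k \<ge> 0"
    and \<delta>_pos: "\<And>k. \<delta> k > 0"
    and \<Omega>_sets: "\<And>k. \<Omega> k \<in> sets M"
    and \<Omega>0: "\<Omega> 0 = space M"
    and \<Omega>_diff: "\<And>k. \<Omega> k - \<Omega> (Suc k) \<subseteq> {\<omega> \<in> space M. V (Z k \<omega>) > \<delta> k}"
    and decay: "\<And>k. (\<integral>\<^sup>+ \<omega>. indicator (\<Omega> (Suc k)) \<omega> * V (Z (Suc k) \<omega>) \<partial>M)
                 \<le> ennreal (\<gamma> k) * (\<integral>\<^sup>+ \<omega>. indicator (\<Omega> k) \<omega> * V (Z k \<omega>) \<partial>M)"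
    and p_ge: "p \<ge> 1"
    and Vbar_meas: "Vbar \<in> borel_measurable N"
    and Vbar_le: "\<And>x. x \<in> space N \<Longrightarrow> Vbar x \<le> V x"
  shows "(\<integral>\<^sup>+ \<omega>. indicator (\<Omega> n) \<omega> * V (Z n \<omega>) \<partial>M)
           \<le> (\<Prod>k<n. ennreal (\<gamma> k)) * (\<integral>\<^sup>+ \<omega>. V (Z 0 \<omega>) \<partial>M)
       \<and> emeasure M (space M - \<Omega> n)
           \<le> (\<Sum>k<n. (\<Prod>l<k. ennreal (\<gamma> l)) / \<delta> k) * (\<integral>\<^sup>+ \<omega>. V (Z 0 \<omega>) \<partial>M)
       \<and> (\<integral>\<^sup>+ \<omega>. Vbar (Z n \<omega>) \<partial>M)
           \<le> (\<Prod>k<n. ennreal (\<gamma> k)) * (\<integral>\<^sup>+ \<omega>. V (Z 0 \<omega>) \<partial>M)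
             + Lp_norm M p (\<lambda>\<omega>. Vbar (Z n \<omega>))
               * ennpow ((\<Sum>k<n. (\<Prod>l<k. ennreal (\<gamma> l)) / \<delta> k) * (\<integral>\<^sup>+ \<omega>. V (Z 0 \<omega>) \<partial>M))
                        (conj_exp p)"
proof -
  note [measurable] = \<Omega>_sets
  have [measurable]: "(\<lambda>\<omega>. V (Z k \<omega>)) \<in> borel_measurable M" "(\<lambda>\<omega>. Vbar (Z k \<omega>)) \<in> borel_measurable M" for k
    using measurable_compose[OF Z_meas V_meas] measurable_compose[OF Z_meas Vbar_meas]
    by (simp_all add: comp_def)
  define E\<^sub>0 where "E\<^sub>0 = (\<integral>\<^sup>+ \<omega>. V (Z 0 \<omega>) \<partial>M)"
  define P where "P k = (\<Prod>l<k. ennreal (\<gamma> l))" for k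
  define S where "S k = (\<Sum>j<k. P j / \<delta> j)" for k
  have geometric: "(\<integral>\<^sup>+ \<omega>. indicator (\<Omega> k) \<omega> * V (Z k \<omega>) \<partial>M) \<le> P k * E\<^sub>0" for k
  proof -
    have "(\<integral>\<^sup>+ \<omega>. indicator (\<Omega> 0) \<omega> * V (Z 0 \<omega>) \<partial>M) = E\<^sub>0"
      unfolding E\<^sub>0_def \<Omega>0 by (intro nn_integral_cong) simp
    then show ?thesis
      using ennreal_le_prod_mult_of_step[of "\<lambda>k. \<integral>\<^sup>+ \<omega>. indicator (\<Omega> k) \<omega> * V (Z k \<omega>) \<partial>M", OF decay]
      by (simp add: P_def)
  qed
  have exit: "emeasure M (\<Omega> k - \<Omega> (Suc k)) \<le> P k / \<delta> k * E\<^sub>0" for k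
  proof -
    have "emeasure M (\<Omega> k - \<Omega> (Suc k)) \<le> (\<integral>\<^sup>+ \<omega>. indicator (\<Omega> k) \<omega> * V (Z k \<omega>) \<partial>M) / \<delta> k"
      using \<Omega>_diff[of k] by (intro emeasure_le_nn_integral_indicator_divide \<delta>_pos) auto
    also have "\<dots> \<le> P k * E\<^sub>0 / \<delta> k"
      by (intro divide_right_mono_ennreal geometric)
    finally show ?thesis
      by (simp add: ennreal_times_divide mult.commute)
  qed
  have complement: "emeasure M (space M - \<Omega> n) \<le> S n * E\<^sub>0"
    using emeasure_diff_le_sum_of_step_bounds[of \<Omega> M, OF \<Omega>_sets exit, of n]
    by (simp add: \<Omega>0 S_def sum_distrib_right)
  have "(\<integral>\<^sup>+ \<omega>. Vbar (Z n \<omega>) \<partial>M)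
      \<le> (\<integral>\<^sup>+ \<omega>. indicator (\<Omega> n) \<omega> * V (Z n \<omega>) \<partial>M)
        + Lp_norm M p (\<lambda>\<omega>. Vbar (Z n \<omega>)) * ennpow (emeasure M (space M - \<Omega> n)) (conj_exp p)"
    using Vbar_le measurable_space[OF Z_meas] p_ge by (intro nn_integral_le_indicator_plus_Lp_norm) auto
  also have "\<dots> \<le> P n * E\<^sub>0 + Lp_norm M p (\<lambda>\<omega>. Vbar (Z n \<omega>)) * ennpow (S n * E\<^sub>0) (conj_exp p)"
    using p_ge by (intro add_mono mult_left_mono ennpow_mono geometric complement conj_exp_nonneg) auto
  finally show ?thesis
    using geometric[of n] complement unfolding P_def S_def E\<^sub>0_def by simp
qed

end
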